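(* Let $n\ge1$, $m\ge0$ be integers and $a,b>0$. For $s\in[0,a)$ let $I_{m,n,s}(x)=\int_s^x(1+t)^nt^m\,dt$, $\mu_s=\frac{(1+a)^na^mb+nI_{m,n-1,s}(a)}{I_{m,n,s}(a)}$ and $$\tilde\psi_s(x)=\frac{\mu_sI_{m,n,s}(x)-nI_{m,n-1,s}(x)}{(1+x)^nx^m},$$ which is the solution of $\psi'(x)+\psi(x)\big(\frac{n}{1+x}+\frac mx\big)=\mu_s-\frac{n}{1+x}$ with $\psi(s)=0$, $\psi(a)=b$. The following are equivalent: (1) $\mu_s(1+s)\ge n$; (2) $\tilde\psi_s(x)>0$ for all $x\in(s,a]$; (3) $\tilde\psi_s'(x)>0$ for all $x\in(s,a]$. Moreover, $\lim_{x\to s^+}\tilde\psi_s'(x)$ exists and is strictly positive if and only if $\mu_s(1+s)>n$. *)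

theory Defs
  imports "HOL-Analysis.Analysis"
begin

definition Iint :: "nat \<Rightarrow> nat \<Rightarrow> real \<Rightarrow> real \<Rightarrow> real" where
  "Iint m n s x = integral {s..x} (\<lambda>t. (1 + t) ^ n * t ^ m)"

definition mu :: "nat \<Rightarrow> nat \<Rightarrow> real \<Rightarrow> real \<Rightarrow> real \<Rightarrow> real" where
  "mu m n a b s = ((1 + a) ^ n * a ^ m * b + real n * Iint m (n - 1) s a) / Iint m n s a"

definition psi_tilde :: "nat \<Rightarrow> nat \<Rightarrow> real \<Rightarrow> real \<Rightarrow> real \<Rightarrow> real \<Rightarrow> real" where
  "psi_tilde m n a b s x =
     (mu m n a b s * Iint m n s x - real n * Iint m (n - 1) s x) / ((1 + x) ^ n * x ^ m)"

end

theory Submission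
  imports Defs
begin

(* Write \<psi> = N / w with w x = (1 + x)^n x^m and N = \<mu> I_{m,n,s} - n I_{m,n-1,s}, so that
   N(s) = 0 and N' = w q with q x = \<mu> - n / (1 + x).  Since \<mu> > 0, q is increasing and changes
   sign exactly where \<mu> (1 + x) = n; hence N, and with it \<psi>, is positive right of s iff
   \<mu> (1 + s) \<ge> n.  For the derivative, differentiate the ODE \<psi>' + p \<psi> = q once more:
   (w \<psi>')' = w (q' - p' \<psi>) > 0 wherever \<psi> > 0, because q' > 0 and p' < 0.  So w \<psi>' is
   increasing and exceeds its right limit at s, which is w(s) q(s) for s > 0 and, via
   L'Hopital, w(0) q(0) / (m + 1) for s = 0; in both cases its sign is that of \<mu> (1 + s) - n. *)

lemma Iint_self [simp]: "Iint m k s s = 0"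
  by (simp add: Iint_def)

lemma Iint_has_real_derivative_within:
  assumes "s \<le> x" "x \<le> c"
  shows "(Iint m k s has_real_derivative (1 + x) ^ k * x ^ m) (at x within {s..c})"
  unfolding Iint_def
  by (rule integral_has_real_derivative) (use assms in \<open>auto intro!: continuous_intros\<close>)

lemma Iint_has_real_derivative:
  assumes "s < x"
  shows "(Iint m k s has_real_derivative (1 + x) ^ k * x ^ m) (at x)"
proof -
  have "at x within {s..x + 1} = at x"
    by (rule at_within_Icc_at) (use assms in auto)
  with Iint_has_real_derivative_within[of s x "x + 1"] assms show ?thesis
    by simp
qed

lemma continuous_on_Iint: "continuous_on {s..c} (Iint m k s)"
  by (rule DERIV_continuous_on[OF Iint_has_real_derivative_within]) auto

lemma Iint_pos:
  assumes "0 \<le> s" "s < x"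
  shows "0 < Iint m k s x"
proof -
  have "Iint m k s s < Iint m k s x"
  proof (rule DERIV_pos_imp_increasing_open[OF assms(2) _ continuous_on_Iint])
    fix t assume "s < t" "t < x"
    with assms show "\<exists>y. (Iint m k s has_real_derivative y) (at t) \<and> 0 < y"
      by (intro exI[of _ "(1 + t) ^ k * t ^ m"] conjI Iint_has_real_derivative) auto
  qed
  then show ?thesis
    by simp
qed

lemma mu_pos:
  assumes "0 < b" "0 \<le> s" "s < a"
  shows "0 < mu m n a b s"
  unfolding mu_def using assms Iint_pos[of s a]
  by (intro divide_pos_pos add_pos_nonneg mult_nonneg_nonneg) (auto intro: less_imp_le)

lemma ex_Ioc_if_eventually_at_right:
  fixes s a :: real
  assumes "\<forall>\<^sub>F x in at_right s. P x" "s < a"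
  shows "\<exists>x\<in>{s<..a}. P x"
proof -
  obtain c where "s < c" and P: "\<And>x. s < x \<Longrightarrow> x < c \<Longrightarrow> P x"
    using assms(1) unfolding eventually_at_right_field by blast
  with assms(2) show ?thesis
    by (intro bexI[of _ "min a ((s + c) / 2)"] P) (auto simp: min_def)
qed

locale psi_ode =
  fixes m n :: nat and \<mu> s :: real
  assumes mu_pos: "0 < \<mu>" and s_nonneg: "0 \<le> s"
begin

definition weight :: "real \<Rightarrow> real" where
  "weight x = (1 + x) ^ n * x ^ m"

definition num :: "real \<Rightarrow> real" where
  "num x = \<mu> * Iint m n s x - real n * Iint m (n - 1) s x"

definition psi :: "real \<Rightarrow> real" where
  "psi x = num x / weight x"

definition ode_coeff :: "real \<Rightarrow> real" where
  "ode_coeff x = n / (1 + x) + m / x"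

definition ode_rhs :: "real \<Rightarrow> real" where
  "ode_rhs x = \<mu> - n / (1 + x)"

lemma weight_pos: "0 < x \<Longrightarrow> 0 < weight x"
  by (simp add: weight_def)

lemma num_at_s [simp]: "num s = 0"
  by (simp add: num_def)

lemma continuous_on_num: "continuous_on {s..c} num"
  unfolding num_def by (intro continuous_intros continuous_on_Iint)

lemma weight_has_real_derivative:
  assumes "0 < x"
  shows "(weight has_real_derivative weight x * ode_coeff x) (at x)"
proof -
  have "(weight has_real_derivative
      n * (1 + x) ^ (n - 1) * x ^ m + (1 + x) ^ n * (m * x ^ (m - 1))) (at x)"
    unfolding weight_def by (auto intro!: derivative_eq_intros)
  moreover have "weight x * (n / (1 + x)) = n * (1 + x) ^ (n - 1) * x ^ m"
    unfolding weight_def using assms by (cases n) (simp_all add: field_simps)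
  moreover have "weight x * (m / x) = (1 + x) ^ n * (m * x ^ (m - 1))"
    unfolding weight_def using assms by (cases m) (simp_all add: field_simps)
  ultimately show ?thesis
    by (simp add: ode_coeff_def distrib_left)
qed

lemma num_has_real_derivative:
  assumes "s < x"
  shows "(num has_real_derivative weight x * ode_rhs x) (at x)"
proof -
  have "(num has_real_derivative
      \<mu> * ((1 + x) ^ n * x ^ m) - n * ((1 + x) ^ (n - 1) * x ^ m)) (at x)"
    unfolding num_def using assms by (auto intro!: derivative_eq_intros Iint_has_real_derivative)
  moreover have "\<mu> * ((1 + x) ^ n * x ^ m) - n * ((1 + x) ^ (n - 1) * x ^ m) = weight x * ode_rhs x"
    unfolding weight_def ode_rhs_def using assms s_nonneg by (cases n) (simp_all add: field_simps)
  ultimately show ?thesis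
    by simp
qed

lemma psi_has_real_derivative:
  assumes "s < x"
  shows "(psi has_real_derivative ode_rhs x - psi x * ode_coeff x) (at x)"
proof -
  have "0 < x" using assms s_nonneg by linarith
  then have "((\<lambda>x. num x / weight x) has_real_derivative
      (weight x * ode_rhs x * weight x - num x * (weight x * ode_coeff x)) / (weight x * weight x)) (at x)"
    using assms weight_pos[of x]
    by (intro DERIV_divide num_has_real_derivative weight_has_real_derivative) auto
  moreover have "(weight x * ode_rhs x * weight x - num x * (weight x * ode_coeff x))
      / (weight x * weight x) = ode_rhs x - psi x * ode_coeff x"
    using weight_pos[OF \<open>0 < x\<close>] by (simp add: psi_def field_simps)
  ultimately show ?thesis
    by (simp add: psi_def[abs_def])
qed

lemma deriv_psi: "s < x \<Longrightarrow> deriv psi x = ode_rhs x - psi x * ode_coeff x"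
  by (rule DERIV_imp_deriv[OF psi_has_real_derivative])

lemma ode_rhs_eq: "0 \<le> x \<Longrightarrow> ode_rhs x = (\<mu> * (1 + x) - n) / (1 + x)"
  by (simp add: ode_rhs_def field_simps)

lemma num_pos:
  assumes "n \<le> \<mu> * (1 + s)" "s < x"
  shows "0 < num x"
proof -
  have "num s < num x"
  proof (rule DERIV_pos_imp_increasing_open[OF assms(2) _ continuous_on_num])
    fix t assume t: "s < t" "t < x"
    have "n \<le> \<mu> * (1 + s)"
      by (fact assms(1))
    also have "\<dots> < \<mu> * (1 + t)"
      using t mu_pos by simp
    finally have "n < \<mu> * (1 + t)" .
    with t s_nonneg have "0 < weight t * ode_rhs t"
      by (simp add: weight_pos ode_rhs_eq)
    with t show "\<exists>y. (num has_real_derivative y) (at t) \<and> 0 < y"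
      using num_has_real_derivative by blast
  qed
  then show ?thesis
    by simp
qed

lemma num_neg_at_right:
  assumes "\<mu> * (1 + s) < n"
  shows "\<forall>\<^sub>F x in at_right s. num x < 0"
proof -
  \<comment> \<open>\<open>n / \<mu> - 1\<close> is the zero of \<open>ode_rhs\<close>\<close>
  have "s < n / \<mu> - 1"
    using assms mu_pos by (simp add: field_simps)
  moreover have "num x < 0" if x: "s < x" "x < n / \<mu> - 1" for x
  proof -
    have "num x < num s"
    proof (rule DERIV_neg_imp_decreasing_open[OF x(1) _ continuous_on_num])
      fix t assume t: "s < t" "t < x"
      have "\<mu> * (1 + t) < \<mu> * (1 + x)"
        using t mu_pos by simp
      also have "\<dots> < n"
        using x(2) mu_pos by (simp add: field_simps)
      finally have "\<mu> * (1 + t) < n" .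
      with t s_nonneg have "weight t * ode_rhs t < 0"
        by (simp add: weight_pos ode_rhs_eq mult_pos_neg divide_neg_pos)
      with t show "\<exists>y. (num has_real_derivative y) (at t) \<and> y < 0"
        using num_has_real_derivative by blast
    qed
    then show ?thesis
      by simp
  qed
  ultimately show ?thesis
    unfolding eventually_at_right_field by blast
qed

lemma psi_pos: "n \<le> \<mu> * (1 + s) \<Longrightarrow> s < x \<Longrightarrow> 0 < psi x"
  using num_pos weight_pos s_nonneg by (simp add: psi_def)

lemma psi_neg_at_right:
  assumes "\<mu> * (1 + s) < n"
  shows "\<forall>\<^sub>F x in at_right s. psi x < 0"
  using num_neg_at_right[OF assms] eventually_at_right_less[of s]
proof eventually_elim
  case (elim x)
  with s_nonneg show ?case
    by (simp add: psi_def weight_pos divide_neg_pos)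
qed

definition slope_limit :: real where
  "slope_limit = ode_rhs s / (if s = 0 then real m + 1 else 1)"

lemma slope_limit_pos_iff: "0 < slope_limit \<longleftrightarrow> n < \<mu> * (1 + s)"
  using s_nonneg by (simp add: slope_limit_def ode_rhs_eq zero_less_divide_iff)

lemma slope_limit_nonneg_iff: "0 \<le> slope_limit \<longleftrightarrow> n \<le> \<mu> * (1 + s)"
  using s_nonneg by (simp add: slope_limit_def ode_rhs_eq zero_le_divide_iff)

lemma num_div_power_tendsto_0:
  assumes "s = 0"
  shows "((\<lambda>x. num x / x ^ Suc m) \<longlongrightarrow> ode_rhs 0 / (real m + 1)) (at_right 0)"
proof (rule lhopital_right_0[where f' = "\<lambda>x. weight x * ode_rhs x"
                                and g' = "\<lambda>x::real. (real m + 1) * x ^ m"])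
  show "(num \<longlongrightarrow> 0) (at_right 0)"
    using assms continuous_on_Icc_at_rightD[OF continuous_on_num, of 1] num_at_s by simp
  show "((\<lambda>x. x ^ Suc m) \<longlongrightarrow> 0) (at_right (0::real))"
    by (rule tendsto_eq_intros refl | simp)+
  show "\<forall>\<^sub>F x in at_right 0. x ^ Suc m \<noteq> (0::real)"
    "\<forall>\<^sub>F x in at_right 0. (real m + 1) * x ^ m \<noteq> (0::real)"
    "\<forall>\<^sub>F x in at_right 0. (num has_real_derivative weight x * ode_rhs x) (at x)"
    using eventually_at_right_less[of "0::real"]
    by (eventually_elim; use assms num_has_real_derivative in simp)+
  show "\<forall>\<^sub>F x in at_right 0. ((\<lambda>x. x ^ Suc m) has_real_derivative (real m + 1) * x ^ m) (at x)"
    using DERIV_pow[of "Suc m"] by (intro always_eventually allI) (simp add: add.commute)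
  have "((\<lambda>x. (1 + x) ^ n * ode_rhs x / (real m + 1))
      \<longlongrightarrow> (1 + 0) ^ n * ode_rhs 0 / (real m + 1)) (at_right 0)"
    unfolding ode_rhs_def by (intro tendsto_intros) auto
  moreover have "\<forall>\<^sub>F x in at_right 0.
      (1 + x) ^ n * ode_rhs x / (real m + 1) = weight x * ode_rhs x / ((real m + 1) * x ^ m)"
    using eventually_at_right_less[of "0::real"] by eventually_elim (simp add: weight_def)
  ultimately show "((\<lambda>x. weight x * ode_rhs x / ((real m + 1) * x ^ m))
      \<longlongrightarrow> ode_rhs 0 / (real m + 1)) (at_right 0)"
    by (simp add: tendsto_cong)
qed

lemma psi_div_tendsto_0:
  assumes "s = 0"
  shows "((\<lambda>x. psi x / x) \<longlongrightarrow> ode_rhs 0 / (real m + 1)) (at_right 0)"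
proof -
  have "((\<lambda>x. num x / x ^ Suc m / (1 + x) ^ n)
      \<longlongrightarrow> ode_rhs 0 / (real m + 1) / (1 + 0) ^ n) (at_right 0)"
    by (intro tendsto_intros num_div_power_tendsto_0 assms) auto
  moreover have "\<forall>\<^sub>F x in at_right 0. num x / x ^ Suc m / (1 + x) ^ n = psi x / x"
    using eventually_at_right_less[of "0::real"] by eventually_elim (simp add: psi_def weight_def)
  ultimately show ?thesis
    by (simp add: tendsto_cong)
qed

lemma deriv_psi_tendsto: "(deriv psi \<longlongrightarrow> slope_limit) (at_right s)"
proof (cases "s = 0")
  case True
  \<comment> \<open>the singular term \<open>m \<psi> x / x\<close> of the ODE has a finite limit by L'Hopital\<close>
  have rhs_lim: "(ode_rhs \<longlongrightarrow> ode_rhs s) (at_right s)"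
    unfolding ode_rhs_def using s_nonneg by (intro tendsto_intros) auto
  have coeff_lim: "((\<lambda>x::real. n * x / (1 + x) + m) \<longlongrightarrow> m) (at_right s)"
    using True by (auto intro!: tendsto_eq_intros)
  have "((\<lambda>x. ode_rhs x - psi x / x * (n * x / (1 + x) + m))
      \<longlongrightarrow> ode_rhs s - ode_rhs s / (real m + 1) * m) (at_right s)"
    by (intro tendsto_diff tendsto_mult rhs_lim coeff_lim psi_div_tendsto_0[OF True, folded True])
  moreover have "ode_rhs s - ode_rhs s / (real m + 1) * m = slope_limit"
    unfolding slope_limit_def using True by (simp add: field_simps)
  moreover have "\<forall>\<^sub>F x in at_right s. ode_rhs x - psi x / x * (n * x / (1 + x) + m) = deriv psi x"
    using eventually_at_right_less[of s]
    by eventually_elim (use s_nonneg in \<open>simp add: deriv_psi ode_coeff_def field_simps\<close>)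
  ultimately show ?thesis
    by (simp add: tendsto_cong)
next
  case False
  then have "0 < s"
    using s_nonneg by simp
  have "(psi \<longlongrightarrow> num s / weight s) (at_right s)"
    unfolding psi_def[abs_def] using \<open>0 < s\<close> weight_pos[OF \<open>0 < s\<close>]
    by (intro tendsto_divide continuous_on_Icc_at_rightD[OF continuous_on_num, of "s + 1"])
      (auto simp: weight_def intro!: tendsto_eq_intros)
  then have "((\<lambda>x. ode_rhs x - psi x * ode_coeff x) \<longlongrightarrow> ode_rhs s - 0 * ode_coeff s) (at_right s)"
    unfolding ode_rhs_def ode_coeff_def using \<open>0 < s\<close> by (intro tendsto_intros) auto
  moreover have "\<forall>\<^sub>F x in at_right s. ode_rhs x - psi x * ode_coeff x = deriv psi x"
    using eventually_at_right_less[of s] by eventually_elim (simp add: deriv_psi)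
  ultimately show ?thesis
    using False by (simp add: slope_limit_def tendsto_cong)
qed

lemma ode_rhs_has_real_derivative:
  "0 < x \<Longrightarrow> (ode_rhs has_real_derivative n / (1 + x)\<^sup>2) (at x)"
  unfolding ode_rhs_def by (auto intro!: derivative_eq_intros simp: power2_eq_square)

lemma ode_coeff_has_real_derivative:
  "0 < x \<Longrightarrow> (ode_coeff has_real_derivative - (n / (1 + x)\<^sup>2 + m / x\<^sup>2)) (at x)"
  unfolding ode_coeff_def by (auto intro!: derivative_eq_intros simp: power2_eq_square)

definition weighted_slope :: "real \<Rightarrow> real" where
  "weighted_slope x = weight x * ode_rhs x - num x * ode_coeff x"

lemma weighted_slope_eq: "s < x \<Longrightarrow> weighted_slope x = weight x * deriv psi x"
  using weight_pos[of x] s_nonneg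
  by (simp add: weighted_slope_def deriv_psi psi_def field_simps)

text \<open>Differentiating the ODE once more: the terms \<open>\<plusminus> weight x * ode_coeff x * ode_rhs x\<close>
  cancel, since \<open>weight' = weight * ode_coeff\<close> and \<open>num' = weight * ode_rhs\<close>.\<close>
lemma weighted_slope_has_real_derivative:
  assumes "s < x"
  shows "(weighted_slope has_real_derivative
           weight x * (n / (1 + x)\<^sup>2) + num x * (n / (1 + x)\<^sup>2 + m / x\<^sup>2)) (at x)"
proof -
  have "0 < x"
    using assms s_nonneg by linarith
  have "(weighted_slope has_real_derivative
          (weight x * (n / (1 + x)\<^sup>2) + weight x * ode_coeff x * ode_rhs x)
        - (num x * - (n / (1 + x)\<^sup>2 + m / x\<^sup>2) + weight x * ode_rhs x * ode_coeff x)) (at x)"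
    unfolding weighted_slope_def[abs_def] using \<open>0 < x\<close> assms
    by (intro DERIV_diff DERIV_mult' weight_has_real_derivative ode_rhs_has_real_derivative
        num_has_real_derivative ode_coeff_has_real_derivative)
  then show ?thesis
    by (simp add: algebra_simps)
qed

lemma weighted_slope_strict_mono:
  assumes "0 < n" "n \<le> \<mu> * (1 + s)" "s < y" "y < x"
  shows "weighted_slope y < weighted_slope x"
proof (rule DERIV_pos_imp_increasing_open[OF assms(4)])
  fix t assume t: "y < t" "t < x"
  with assms have "s < t" "0 < t"
    using s_nonneg by linarith+
  then have "0 < weight t * (n / (1 + t)\<^sup>2) + num t * (n / (1 + t)\<^sup>2 + m / t\<^sup>2)"
    using assms num_pos weight_pos
    by (intro add_pos_nonneg mult_pos_pos mult_nonneg_nonneg add_nonneg_nonneg) (auto intro: less_imp_le)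
  then show "\<exists>d. (weighted_slope has_real_derivative d) (at t) \<and> 0 < d"
    using weighted_slope_has_real_derivative[OF \<open>s < t\<close>] by blast
next
  have "\<forall>t\<in>{y..x}. isCont weighted_slope t"
    using assms(3) by (auto intro!: DERIV_isCont weighted_slope_has_real_derivative)
  then show "continuous_on {y..x} weighted_slope"
    by (rule continuous_at_imp_continuous_on)
qed

lemma weighted_slope_tendsto: "(weighted_slope \<longlongrightarrow> weight s * slope_limit) (at_right s)"
proof -
  have "((\<lambda>x. weight x * deriv psi x) \<longlongrightarrow> weight s * slope_limit) (at_right s)"
    unfolding weight_def by (intro tendsto_intros deriv_psi_tendsto)
  moreover have "\<forall>\<^sub>F x in at_right s. weight x * deriv psi x = weighted_slope x"
    using eventually_at_right_less[of s] by eventually_elim (simp add: weighted_slope_eq)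
  ultimately show ?thesis
    by (simp add: tendsto_cong)
qed

lemma deriv_psi_pos:
  assumes "0 < n" "n \<le> \<mu> * (1 + s)" "s < x"
  shows "0 < deriv psi x"
proof -
  define y where "y = (s + x) / 2"
  have y: "s < y" "y < x"
    using assms(3) by (auto simp: y_def)
  have "\<forall>\<^sub>F z in at_right s. weighted_slope z \<le> weighted_slope y"
    unfolding eventually_at_right_field
    using y weighted_slope_strict_mono[OF assms(1,2)] by (intro exI[of _ y]) (auto intro: less_imp_le)
  then have "weight s * slope_limit \<le> weighted_slope y"
    by (rule tendsto_upperbound[OF weighted_slope_tendsto _ trivial_limit_at_right_real])
  moreover have "0 \<le> weight s * slope_limit"
    using assms(2) s_nonneg by (simp add: slope_limit_nonneg_iff weight_def)
  moreover have "weighted_slope y < weighted_slope x"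
    using weighted_slope_strict_mono[OF assms(1,2) y] .
  ultimately have "0 < weight x * deriv psi x"
    using weighted_slope_eq[OF assms(3)] by linarith
  then show ?thesis
    using weight_pos[of x] assms(3) s_nonneg by (simp add: zero_less_mult_iff)
qed

lemma psi_pos_iff:
  assumes "s < a"
  shows "(\<forall>x\<in>{s<..a}. 0 < psi x) \<longleftrightarrow> n \<le> \<mu> * (1 + s)"
  using psi_pos ex_Ioc_if_eventually_at_right[OF psi_neg_at_right assms]
  by (meson greaterThanAtMost_iff not_le not_less_iff_gr_or_eq)

lemma deriv_psi_pos_iff:
  assumes "0 < n" "s < a"
  shows "(\<forall>x\<in>{s<..a}. 0 < deriv psi x) \<longleftrightarrow> n \<le> \<mu> * (1 + s)"
proof -
  have "\<forall>\<^sub>F x in at_right s. deriv psi x < 0" if "\<mu> * (1 + s) < n"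
    using order_tendstoD(2)[OF deriv_psi_tendsto] that slope_limit_nonneg_iff by simp
  then show ?thesis
    using deriv_psi_pos[OF assms(1)] ex_Ioc_if_eventually_at_right[OF _ assms(2)]
    by (meson greaterThanAtMost_iff not_le not_less_iff_gr_or_eq)
qed

lemma deriv_psi_limit_pos_iff:
  "(\<exists>L. (deriv psi \<longlongrightarrow> L) (at_right s) \<and> 0 < L) \<longleftrightarrow> n < \<mu> * (1 + s)"
  using deriv_psi_tendsto tendsto_unique[OF trivial_limit_at_right_real] slope_limit_pos_iff
  by blast

end

theorem lemma3p2:
  fixes n m :: nat and a b s :: real
  assumes "n \<ge> 1" and "a > 0" and "b > 0" and "0 \<le> s" and "s < a"
  shows "(mu m n a b s * (1 + s) \<ge> real n \<longleftrightarrow> (\<forall>x\<in>{s<..a}. psi_tilde m n a b s x > 0))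
       \<and> ((\<forall>x\<in>{s<..a}. psi_tilde m n a b s x > 0) \<longleftrightarrow>
            (\<forall>x\<in>{s<..a}. deriv (psi_tilde m n a b s) x > 0))
       \<and> ((\<exists>L. ((\<lambda>x. deriv (psi_tilde m n a b s) x) \<longlongrightarrow> L) (at_right s) \<and> L > 0)
            \<longleftrightarrow> mu m n a b s * (1 + s) > real n)"
proof -
  interpret psi_ode m n "mu m n a b s" s
    using assms mu_pos by unfold_locales auto
  have "psi_tilde m n a b s = psi"
    by (simp add: fun_eq_iff psi_tilde_def psi_def num_def weight_def)
  then show ?thesis
    using psi_pos_iff deriv_psi_pos_iff deriv_psi_limit_pos_iff assms by auto
qed

end
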